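(* Let $\sigma(x)=1/(1+e^{-x})$, let $a,\beta_n,B_n,\gamma_n^*\ge1$, $K_n,L,r,n\in\mathbb{N}$, and let $f_{\mathbf{w}}$ be the network described in the context. Let $(X_1,Y_1),\dots,(X_n,Y_n)\in\mathbb{R}^d\times\mathbb{R}$ with $X_i\in[-a,a]^d$ and $|Y_i|\le\beta_n$ for $i=1,\dots,n$, and let $F_n(\mathbf{w})=\frac1n\sum_{i=1}^n|Y_i-f_{\mathbf{w}}(X_i)|^2$. Assume $K_n\gamma_n^*\ge\beta_n$, and let $\mathbf{w}$ satisfy $|w^{(L)}_{1,1,k}|\le\gamma_n^*$ for all $k$ and $|w^{(l)}_{k,i,j}|\le B_n$ for all $k,i,j$ and $l\in\{1,\dots,L-1\}$. Then there is a constant $c_{14}=c_{14}(d,L,r,a)>0$ such that $$\|\nabla_{\mathbf{w}}F_n(\mathbf{w})\|\le c_{14}\,K_n^{3/2}(\gamma_n^* )^2B_n^L.$$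
   Context: For a weight vector $\mathbf{w}$, $f_{\mathbf{w}}(x)=\sum_{j=1}^{K_n}w^{(L)}_{1,1,j}f^{(L)}_{j,1}(x)$, where for $k\in\{1,\dots,K_n\}$, $i\in\{1,\dots,r\}$: $f^{(l)}_{k,i}(x)=\sigma\big(\sum_{j=1}^rw^{(l-1)}_{k,i,j}f^{(l-1)}_{k,j}(x)+w^{(l-1)}_{k,i,0}\big)$ for $l=2,\dots,L$ and $f^{(1)}_{k,i}(x)=\sigma\big(\sum_{j=1}^dw^{(0)}_{k,i,j}x^{(j)}+w^{(0)}_{k,i,0}\big)$. The gradient is with respect to all weights; $\|\cdot\|$ is the Euclidean norm. *)

theory Defs
  imports "HOL-Analysis.Analysis"
begin

type_synonym weights = "nat \<times> nat \<times> nat \<times> nat \<Rightarrow> real"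
  \<comment> \<open>w (l,k,i,j) stands for w^{(l)}_{k,i,j}\<close>

definition sigmoid :: "real \<Rightarrow> real" where
  "sigmoid x = 1 / (1 + exp (- x))"

text \<open>hidden d r w x l k i = f^{(l)}_{k,i}(x) for l \<ge> 1; inputs x are indexed by 1..d.\<close>
fun hidden :: "nat \<Rightarrow> nat \<Rightarrow> weights \<Rightarrow> (nat \<Rightarrow> real) \<Rightarrow> nat \<Rightarrow> nat \<Rightarrow> nat \<Rightarrow> real" where
  "hidden d r w x 0 k i = 0"
| "hidden d r w x (Suc 0) k i =
     sigmoid ((\<Sum>j=1..d. w (0,k,i,j) * x j) + w (0,k,i,0))"
| "hidden d r w x (Suc (Suc l)) k i =
     sigmoid ((\<Sum>j=1..r. w (Suc l,k,i,j) * hidden d r w x (Suc l) k j) + w (Suc l,k,i,0))"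

definition net :: "nat \<Rightarrow> nat \<Rightarrow> nat \<Rightarrow> nat \<Rightarrow> weights \<Rightarrow> (nat \<Rightarrow> real) \<Rightarrow> real" where
  "net d L r K w x = (\<Sum>j=1..K. w (L,1,1,j) * hidden d r w x L j 1)"

definition weight_index :: "nat \<Rightarrow> nat \<Rightarrow> nat \<Rightarrow> nat \<Rightarrow> (nat \<times> nat \<times> nat \<times> nat) set" where
  "weight_index d L r K =
     {(l,k,i,j). l = 0 \<and> k \<in> {1..K} \<and> i \<in> {1..r} \<and> j \<in> {0..d}}
   \<union> {(l,k,i,j). l \<in> {1..L-1} \<and> k \<in> {1..K} \<and> i \<in> {1..r} \<and> j \<in> {0..r}}
   \<union> {(l,k,i,j). l = L \<and> k = 1 \<and> i = 1 \<and> j \<in> {1..K}}"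

definition emp_risk :: "nat \<Rightarrow> nat \<Rightarrow> nat \<Rightarrow> nat \<Rightarrow> nat \<Rightarrow> (nat \<Rightarrow> nat \<Rightarrow> real) \<Rightarrow> (nat \<Rightarrow> real) \<Rightarrow> weights \<Rightarrow> real" where
  "emp_risk d L r K n X Y w = (1 / real n) * (\<Sum>i=1..n. (Y i - net d L r K w (X i))\<^sup>2)"

definition grad_norm :: "(weights \<Rightarrow> real) \<Rightarrow> (nat \<times> nat \<times> nat \<times> nat) set \<Rightarrow> weights \<Rightarrow> real" where
  "grad_norm F I w = sqrt (\<Sum>p\<in>I. (deriv (\<lambda>t. F (w(p := t))) (w p))\<^sup>2)"

end

theory Submission
  imports Defs
begin

(* Each partial derivative of the empirical risk is an average of 2 (f_w(X_i) - Y_i) times a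
   partial derivative of f_w(X_i). As |sigma| <= 1, the residual is at most beta + K gamma <= 2 K gamma.
   As |sigma'| <= 1, passing through a hidden layer multiplies a derivative bound by at most (r+1) B,
   so hidden units of layer l have partial derivatives at most 2 a ((r+1) B)^(l-1); the unbounded
   input-layer weights never appear as factors. A weight influences only its own one of the K parallel
   sub-networks, hence the partial derivatives of f_w are at most 4 gamma a ((r+1) B)^(L-1), without a
   factor K. Finally the gradient has O(K) coordinates, which contributes the factor K^(1/2). *)

lemma sigmoid_pos: "0 < sigmoid x"
  unfolding sigmoid_def by (simp add: add_pos_pos)

lemma sigmoid_le_1: "sigmoid x \<le> 1"
  unfolding sigmoid_def by (simp add: add_pos_pos)

lemma sigmoid_has_real_derivative:
  "(sigmoid has_real_derivative sigmoid x * (1 - sigmoid x)) (at x)"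
proof -
  have "0 < 1 + exp (- x)" by (simp add: add_pos_pos)
  then have pos: "1 + exp (- x) \<noteq> 0" by simp
  have "(sigmoid has_real_derivative exp (- x) / (1 + exp (- x))\<^sup>2) (at x)"
    unfolding sigmoid_def[abs_def]
    by (auto intro!: derivative_eq_intros simp: power2_eq_square field_simps pos)
  also have "exp (- x) / (1 + exp (- x))\<^sup>2 = sigmoid x * (1 - sigmoid x)"
    unfolding sigmoid_def using pos by (simp add: power2_eq_square field_simps)
  finally show ?thesis .
qed

lemma abs_sigmoid_deriv_le_1: "\<bar>sigmoid x * (1 - sigmoid x)\<bar> \<le> 1"
  using sigmoid_pos[of x] sigmoid_le_1[of x] by (simp add: abs_mult mult_le_one)

lemma abs_hidden_le_1: "\<bar>hidden d r w x l k i\<bar> \<le> 1"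
  by (induction d r w x l k i rule: hidden.induct) (simp_all add: sigmoid_pos less_imp_le sigmoid_le_1)

lemma hidden_fun_upd_other_block:
  "k \<noteq> k0 \<Longrightarrow> hidden d r (w((l0, k0, i0, j0) := t)) x l k i = hidden d r w x l k i"
  by (induction d r w x l k i rule: hidden.induct) simp_all

lemma fun_upd_has_real_derivative:
  "((\<lambda>t. (w(p := t)) q) has_real_derivative of_bool (q = p)) (at t0)"
  by (cases "q = p") auto

lemma abs_sum_of_bool_le:
  fixes c :: "nat \<Rightarrow> real"
  assumes "\<And>j. j \<in> A \<Longrightarrow> \<bar>c j\<bar> \<le> M" and "0 \<le> M"
  shows "\<bar>\<Sum>j\<in>A. of_bool ((l, k, i, j) = p) * c j\<bar> \<le> M"
proof (cases "finite A")
  case True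
  obtain l0 k0 i0 j0 where p: "p = (l0, k0, i0, j0)" by (cases p) auto
  have "(\<Sum>j\<in>A. of_bool ((l, k, i, j) = p) * c j) = (if (l, k, i) = (l0, k0, i0) \<and> j0 \<in> A then c j0 else 0)"
  proof (cases "(l, k, i) = (l0, k0, i0)")
    case True
    then have "(\<Sum>j\<in>A. of_bool ((l, k, i, j) = p) * c j) = (\<Sum>j\<in>A. if j = j0 then c j else 0)"
      by (intro sum.cong) (auto simp: p)
    with True show ?thesis using \<open>finite A\<close> by simp
  qed (auto simp: p)
  then show ?thesis using assms by auto
qed (use assms in simp)

lemma sigmoid_comp_has_real_derivative_le:
  assumes "(f has_real_derivative D) (at t)" and "\<bar>D\<bar> \<le> M"
  shows "\<exists>E. ((\<lambda>t. sigmoid (f t)) has_real_derivative E) (at t) \<and> \<bar>E\<bar> \<le> M"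
proof (intro exI conjI)
  show "((\<lambda>t. sigmoid (f t)) has_real_derivative sigmoid (f t) * (1 - sigmoid (f t)) * D) (at t)"
    using DERIV_chain2[OF sigmoid_has_real_derivative assms(1)] .
  have "\<bar>sigmoid (f t) * (1 - sigmoid (f t)) * D\<bar> \<le> \<bar>D\<bar>"
    using abs_sigmoid_deriv_le_1 by (simp add: abs_mult mult_left_le_one_le)
  with assms(2) show "\<bar>sigmoid (f t) * (1 - sigmoid (f t)) * D\<bar> \<le> M"
    by linarith
qed

lemma neuron_input_has_real_derivative:
  fixes w :: weights and h :: "nat \<Rightarrow> real \<Rightarrow> real"
  assumes h_deriv: "\<And>j. j \<in> {1..m} \<Longrightarrow> (h j has_real_derivative Dh j) (at (w p))"
    and h_bound: "\<And>j. j \<in> {1..m} \<Longrightarrow> \<bar>h j (w p)\<bar> \<le> c" and "0 \<le> c"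
    and Dh_bound: "\<And>j. j \<in> {1..m} \<Longrightarrow> \<bar>Dh j * w (l, k, i, j)\<bar> \<le> M"
  shows "\<exists>D. ((\<lambda>t. (\<Sum>j=1..m. (w(p := t)) (l, k, i, j) * h j t) + (w(p := t)) (l, k, i, 0))
      has_real_derivative D) (at (w p)) \<and> \<bar>D\<bar> \<le> c + 1 + m * M"
proof (intro exI conjI)
  define D where "D = (\<Sum>j=1..m. of_bool ((l, k, i, j) = p) * h j (w p) + Dh j * w (l, k, i, j))
    + of_bool ((l, k, i, 0) = p)"
  show "((\<lambda>t. (\<Sum>j=1..m. (w(p := t)) (l, k, i, j) * h j t) + (w(p := t)) (l, k, i, 0))
      has_real_derivative D) (at (w p))"
    unfolding D_def
    by (intro DERIV_add DERIV_sum DERIV_cong[OF DERIV_mult[OF fun_upd_has_real_derivative h_deriv]]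
        fun_upd_has_real_derivative) simp_all
  have "\<bar>\<Sum>j=1..m. of_bool ((l, k, i, j) = p) * h j (w p)\<bar> \<le> c"
    using h_bound \<open>0 \<le> c\<close> by (rule abs_sum_of_bool_le)
  moreover have "\<bar>\<Sum>j=1..m. Dh j * w (l, k, i, j)\<bar> \<le> m * M"
  proof -
    have "\<bar>\<Sum>j=1..m. Dh j * w (l, k, i, j)\<bar> \<le> (\<Sum>j=1..m. \<bar>Dh j * w (l, k, i, j)\<bar>)"
      by (rule sum_abs)
    also have "\<dots> \<le> m * M"
      using sum_bounded_above[of "{1..m}" "\<lambda>j. \<bar>Dh j * w (l, k, i, j)\<bar>", OF Dh_bound] by simp
    finally show ?thesis .
  qed
  moreover have "\<bar>of_bool ((l, k, i, 0) = p)\<bar> \<le> (1::real)"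
    by simp
  ultimately show "\<bar>D\<bar> \<le> c + 1 + m * M"
    unfolding D_def sum.distrib by linarith
qed

lemma two_le_deriv_bound:
  assumes "1 \<le> a" and "1 \<le> B"
  shows "2 \<le> 2 * a * ((real r + 1) * B) ^ e"
proof -
  have "1 \<le> ((real r + 1) * B) ^ e"
    using \<open>1 \<le> B\<close> by (intro one_le_power) (simp add: mult_ge1_I)
  then show ?thesis
    using \<open>1 \<le> a\<close> by (simp add: mult_ge1_I)
qed

lemma hidden_first_layer_has_real_derivative:
  fixes w :: weights
  assumes "0 \<le> a" and x_bound: "\<forall>j\<in>{1..d}. \<bar>x j\<bar> \<le> a"
  shows "\<exists>D. ((\<lambda>t. hidden d r (w(p := t)) x (Suc 0) k i) has_real_derivative D) (at (w p))
    \<and> \<bar>D\<bar> \<le> a + 1"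
proof -
  have "\<exists>S'. ((\<lambda>t. (\<Sum>j=1..d. (w(p := t)) (0, k, i, j) * x j) + (w(p := t)) (0, k, i, 0))
      has_real_derivative S') (at (w p)) \<and> \<bar>S'\<bar> \<le> a + 1 + real d * 0"
    by (rule neuron_input_has_real_derivative[where h = "\<lambda>j t. x j" and Dh = "\<lambda>j. 0"])
      (use x_bound \<open>0 \<le> a\<close> in auto)
  then obtain S' where "((\<lambda>t. (\<Sum>j=1..d. (w(p := t)) (0, k, i, j) * x j) + (w(p := t)) (0, k, i, 0))
      has_real_derivative S') (at (w p))" and "\<bar>S'\<bar> \<le> a + 1"
    by auto
  moreover have "(\<lambda>t. hidden d r (w(p := t)) x (Suc 0) k i)
      = (\<lambda>t. sigmoid ((\<Sum>j=1..d. (w(p := t)) (0, k, i, j) * x j) + (w(p := t)) (0, k, i, 0)))"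
    by simp
  ultimately show ?thesis
    by (simp only:) (rule sigmoid_comp_has_real_derivative_le)
qed

lemma hidden_next_layer_has_real_derivative:
  fixes w :: weights
  assumes Dh: "\<And>j. ((\<lambda>t. hidden d r (w(p := t)) x (Suc l) k j) has_real_derivative Dh j) (at (w p))"
    and Dh_w: "\<And>j. \<bar>Dh j * w (Suc l, k, i, j)\<bar> \<le> M"
  shows "\<exists>D. ((\<lambda>t. hidden d r (w(p := t)) x (Suc (Suc l)) k i) has_real_derivative D) (at (w p))
    \<and> \<bar>D\<bar> \<le> 2 + r * M"
proof -
  have "\<exists>S'. ((\<lambda>t. (\<Sum>j=1..r. (w(p := t)) (Suc l, k, i, j) * hidden d r (w(p := t)) x (Suc l) k j)
      + (w(p := t)) (Suc l, k, i, 0)) has_real_derivative S') (at (w p)) \<and> \<bar>S'\<bar> \<le> 1 + 1 + r * M"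
    by (rule neuron_input_has_real_derivative[where h = "\<lambda>j t. hidden d r (w(p := t)) x (Suc l) k j"])
      (rule Dh, simp_all add: abs_hidden_le_1 Dh_w)
  then obtain S' where "((\<lambda>t. (\<Sum>j=1..r. (w(p := t)) (Suc l, k, i, j) * hidden d r (w(p := t)) x (Suc l) k j)
      + (w(p := t)) (Suc l, k, i, 0)) has_real_derivative S') (at (w p))" and "\<bar>S'\<bar> \<le> 2 + r * M"
    by auto
  moreover have "(\<lambda>t. hidden d r (w(p := t)) x (Suc (Suc l)) k i)
      = (\<lambda>t. sigmoid ((\<Sum>j=1..r. (w(p := t)) (Suc l, k, i, j) * hidden d r (w(p := t)) x (Suc l) k j)
          + (w(p := t)) (Suc l, k, i, 0)))"
    by simp
  ultimately show ?thesis
    by (simp only:) (rule sigmoid_comp_has_real_derivative_le)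
qed

lemma hidden_has_real_derivative:
  fixes w :: weights
  assumes "1 \<le> a" and "1 \<le> B" and x_bound: "\<forall>j\<in>{1..d}. \<bar>x j\<bar> \<le> a"
    and w_bound: "\<forall>l\<in>{1..L-1}. \<forall>k i j. \<bar>w (l, k, i, j)\<bar> \<le> B" and "l \<le> L"
  shows "\<exists>D. ((\<lambda>t. hidden d r (w(p := t)) x l k i) has_real_derivative D) (at (w p))
    \<and> \<bar>D\<bar> \<le> 2 * a * ((real r + 1) * B) ^ (l - 1)"
  using \<open>l \<le> L\<close>
proof (induction l arbitrary: k i)
  case 0
  then show ?case using \<open>1 \<le> a\<close> by (intro exI[of _ 0]) simp
next
  case (Suc l)
  show ?case
  proof (cases l)
    case 0
    then show ?thesis
      using hidden_first_layer_has_real_derivative[OF _ x_bound, where r = r and w = w and p = p and k = k and i = i] \<open>1 \<le> a\<close> by auto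
  next
    case (Suc m)
    define M where "M = 2 * a * ((real r + 1) * B) ^ (l - 1)"
    have "\<forall>j. \<exists>D. ((\<lambda>t. hidden d r (w(p := t)) x l k j) has_real_derivative D) (at (w p)) \<and> \<bar>D\<bar> \<le> M"
      using Suc.IH Suc.prems unfolding M_def by (meson Suc_leD)
    then obtain Dh where Dh: "\<And>j. ((\<lambda>t. hidden d r (w(p := t)) x l k j) has_real_derivative Dh j) (at (w p))"
      "\<And>j. \<bar>Dh j\<bar> \<le> M"
      by metis
    have Dh_w: "\<bar>Dh j * w (l, k, i, j)\<bar> \<le> M * B" for j
      using Dh(2)[of j] w_bound Suc.prems \<open>l = Suc m\<close> by (simp add: abs_mult mult_mono)
    have "2 \<le> M"
      unfolding M_def using \<open>1 \<le> a\<close> \<open>1 \<le> B\<close> by (rule two_le_deriv_bound)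
    then have "2 + r * (M * B) \<le> 2 * a * ((real r + 1) * B) ^ (Suc l - 1)"
      using \<open>1 \<le> B\<close> mult_mono[of 2 M 1 B] unfolding M_def \<open>l = Suc m\<close> by (simp add: algebra_simps)
    moreover have "\<exists>D. ((\<lambda>t. hidden d r (w(p := t)) x (Suc l) k i) has_real_derivative D) (at (w p))
        \<and> \<bar>D\<bar> \<le> 2 + r * (M * B)"
      unfolding \<open>l = Suc m\<close>
      by (rule hidden_next_layer_has_real_derivative[OF Dh(1)[unfolded \<open>l = Suc m\<close>] Dh_w[unfolded \<open>l = Suc m\<close>]])
    ultimately show ?thesis
      by (meson order_trans)
  qed
qed

lemma abs_net_le:
  assumes "\<forall>k. \<bar>w (L, 1, 1, k)\<bar> \<le> \<gamma>"
  shows "\<bar>net d L r K w x\<bar> \<le> K * \<gamma>"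
proof -
  have "\<bar>net d L r K w x\<bar> \<le> (\<Sum>j=1..K. \<bar>w (L, 1, 1, j)\<bar> * \<bar>hidden d r w x L j 1\<bar>)"
    unfolding net_def abs_mult[symmetric] by (rule sum_abs)
  also have "\<dots> \<le> (\<Sum>j=1..K. \<gamma> * 1)"
    using assms by (intro sum_mono mult_mono) (auto simp: abs_hidden_le_1)
  finally show ?thesis by simp
qed

lemma net_has_real_derivative:
  fixes w :: weights
  assumes "1 \<le> a" and "1 \<le> B" and x_bound: "\<forall>j\<in>{1..d}. \<bar>x j\<bar> \<le> a"
    and w_bound: "\<forall>l\<in>{1..L-1}. \<forall>k i j. \<bar>w (l, k, i, j)\<bar> \<le> B"
    and "1 \<le> \<gamma>" and out_bound: "\<forall>k. \<bar>w (L, 1, 1, k)\<bar> \<le> \<gamma>"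
  shows "\<exists>D. ((\<lambda>t. net d L r K (w(p := t)) x) has_real_derivative D) (at (w p))
    \<and> \<bar>D\<bar> \<le> 4 * \<gamma> * a * ((real r + 1) * B) ^ (L - 1)"
proof -
  obtain l0 k0 i0 j0 where p: "p = (l0, k0, i0, j0)" by (cases p) auto
  define M where "M = 2 * a * ((real r + 1) * B) ^ (L - 1)"
  obtain D0 where D0: "((\<lambda>t. hidden d r (w(p := t)) x L k0 1) has_real_derivative D0) (at (w p))"
    and "\<bar>D0\<bar> \<le> M"
    using hidden_has_real_derivative[OF \<open>1 \<le> a\<close> \<open>1 \<le> B\<close> x_bound w_bound order_refl] unfolding M_def by blast
  define Dh where "Dh j = (if j = k0 then D0 else 0)" for j
  \<comment> \<open>Only the sub-network containing the perturbed weight depends on it, so the output sum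
      contributes a single term; this is what keeps the bound linear in K.\<close>
  have Dh: "((\<lambda>t. hidden d r (w(p := t)) x L j 1) has_real_derivative Dh j) (at (w p))" for j
    using D0 by (simp add: Dh_def p hidden_fun_upd_other_block)
  define D where "D = (\<Sum>j=1..K. of_bool ((L, 1, 1, j) = p) * hidden d r w x L j 1 + Dh j * w (L, 1, 1, j))"
  have "((\<lambda>t. net d L r K (w(p := t)) x) has_real_derivative D) (at (w p))"
    unfolding net_def D_def
    by (intro DERIV_sum DERIV_cong[OF DERIV_mult[OF fun_upd_has_real_derivative Dh]]) simp
  moreover have "\<bar>\<Sum>j=1..K. of_bool ((L, 1, 1, j) = p) * hidden d r w x L j 1\<bar> \<le> 1"
    by (rule abs_sum_of_bool_le) (simp_all add: abs_hidden_le_1)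
  moreover have "\<bar>\<Sum>j=1..K. Dh j * w (L, 1, 1, j)\<bar> \<le> M * \<gamma>"
  proof -
    have "(\<Sum>j=1..K. Dh j * w (L, 1, 1, j)) = (\<Sum>j=1..K. if j = k0 then D0 * w (L, 1, 1, k0) else 0)"
      by (intro sum.cong) (simp_all add: Dh_def)
    then show ?thesis
      using \<open>\<bar>D0\<bar> \<le> M\<close> out_bound[rule_format, of k0] \<open>1 \<le> \<gamma>\<close> by (simp add: abs_mult mult_mono)
  qed
  moreover have "2 \<le> M"
    unfolding M_def using \<open>1 \<le> a\<close> \<open>1 \<le> B\<close> by (rule two_le_deriv_bound)
  then have "1 + M * \<gamma> \<le> 2 * \<gamma> * M"
    using \<open>1 \<le> \<gamma>\<close> mult_mono[of 2 M 1 \<gamma>] by (simp add: algebra_simps)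
  ultimately have "\<bar>D\<bar> \<le> 2 * \<gamma> * M"
    unfolding D_def sum.distrib by linarith
  then show ?thesis
    using \<open>((\<lambda>t. net d L r K (w(p := t)) x) has_real_derivative D) (at (w p))\<close>
    unfolding M_def by (auto simp: algebra_simps)
qed

lemma abs_deriv_mean_square_loss_le:
  fixes g :: "nat \<Rightarrow> real \<Rightarrow> real"
  assumes g_deriv: "\<And>i. i \<in> {1..n} \<Longrightarrow> (g i has_real_derivative Dg i) (at t0)"
    and Dg_bound: "\<And>i. i \<in> {1..n} \<Longrightarrow> \<bar>Dg i\<bar> \<le> G"
    and residual_bound: "\<And>i. i \<in> {1..n} \<Longrightarrow> \<bar>Y i - g i t0\<bar> \<le> R"
    and "0 \<le> G" and "0 \<le> R"
  shows "\<bar>deriv (\<lambda>t. 1 / real n * (\<Sum>i=1..n. (Y i - g i t)\<^sup>2)) t0\<bar> \<le> 2 * R * G"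
proof -
  define E where "E i = 2 * (Y i - g i t0) * (- Dg i)" for i
  define D where "D = 1 / real n * (\<Sum>i=1..n. E i)"
  have "((\<lambda>t. 1 / real n * (\<Sum>i=1..n. (Y i - g i t)\<^sup>2)) has_real_derivative D) (at t0)"
    unfolding D_def E_def
    by (intro DERIV_cmult DERIV_sum DERIV_cong[OF DERIV_power[OF DERIV_diff[OF DERIV_const g_deriv]]])
      simp_all
  then have "deriv (\<lambda>t. 1 / real n * (\<Sum>i=1..n. (Y i - g i t)\<^sup>2)) t0 = D"
    by (rule DERIV_imp_deriv)
  moreover have "\<bar>E i\<bar> \<le> 2 * R * G" if "i \<in> {1..n}" for i
    using residual_bound[OF that] Dg_bound[OF that] \<open>0 \<le> G\<close>
    unfolding E_def by (simp add: abs_mult mult_mono)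
  then have "(\<Sum>i=1..n. \<bar>E i\<bar>) \<le> real n * (2 * R * G)"
    using sum_bounded_above[of "{1..n}" "\<lambda>i. \<bar>E i\<bar>"] by simp
  then have "\<bar>D\<bar> \<le> 1 / real n * (real n * (2 * R * G))"
    unfolding D_def abs_mult abs_divide abs_one abs_of_nat
    by (intro mult_left_mono order_trans[OF sum_abs]) simp_all
  moreover have "1 / real n * (real n * (2 * R * G)) \<le> 2 * R * G"
    using \<open>0 \<le> G\<close> \<open>0 \<le> R\<close> by (cases "n = 0") simp_all
  ultimately show ?thesis by linarith
qed

lemma abs_partial_deriv_emp_risk_le:
  fixes w :: weights
  assumes "1 \<le> a" and "1 \<le> B" and "1 \<le> \<gamma>"
    and data_bound: "\<forall>i\<in>{1..n}. (\<forall>j\<in>{1..d}. \<bar>X i j\<bar> \<le> a) \<and> \<bar>Y i\<bar> \<le> \<beta>"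
    and "\<beta> \<le> real K * \<gamma>"
    and out_bound: "\<forall>k. \<bar>w (L, 1, 1, k)\<bar> \<le> \<gamma>"
    and w_bound: "\<forall>l\<in>{1..L-1}. \<forall>k i j. \<bar>w (l, k, i, j)\<bar> \<le> B"
  shows "\<bar>deriv (\<lambda>t. emp_risk d L r K n X Y (w(p := t))) (w p)\<bar>
    \<le> 16 * a * real K * \<gamma>\<^sup>2 * ((real r + 1) * B) ^ (L - 1)"
proof -
  have "\<forall>i\<in>{1..n}. \<exists>D. ((\<lambda>t. net d L r K (w(p := t)) (X i)) has_real_derivative D) (at (w p))
      \<and> \<bar>D\<bar> \<le> 4 * \<gamma> * a * ((real r + 1) * B) ^ (L - 1)"
    using net_has_real_derivative[OF \<open>1 \<le> a\<close> \<open>1 \<le> B\<close> _ w_bound \<open>1 \<le> \<gamma>\<close> out_bound] data_bound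
    by blast
  then obtain Dn where Dn_deriv:
    "\<And>i. i \<in> {1..n} \<Longrightarrow> ((\<lambda>t. net d L r K (w(p := t)) (X i)) has_real_derivative Dn i) (at (w p))"
    and Dn_bound: "\<And>i. i \<in> {1..n} \<Longrightarrow> \<bar>Dn i\<bar> \<le> 4 * \<gamma> * a * ((real r + 1) * B) ^ (L - 1)"
    by metis
  have residual_bound: "\<bar>Y i - net d L r K w (X i)\<bar> \<le> 2 * real K * \<gamma>" if "i \<in> {1..n}" for i
    using data_bound that \<open>\<beta> \<le> real K * \<gamma>\<close> abs_net_le[OF out_bound, of d r K "X i"] by fastforce
  have "0 \<le> 4 * \<gamma> * a * ((real r + 1) * B) ^ (L - 1)" "0 \<le> 2 * real K * \<gamma>"
    using \<open>1 \<le> a\<close> \<open>1 \<le> B\<close> \<open>1 \<le> \<gamma>\<close> by simp_all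
  then have "\<bar>deriv (\<lambda>t. emp_risk d L r K n X Y (w(p := t))) (w p)\<bar>
      \<le> 2 * (2 * real K * \<gamma>) * (4 * \<gamma> * a * ((real r + 1) * B) ^ (L - 1))"
    unfolding emp_risk_def
    by (rule abs_deriv_mean_square_loss_le[where g = "\<lambda>i t. net d L r K (w(p := t)) (X i)" and Dg = Dn, rotated 3])
      (fact Dn_deriv, fact Dn_bound, simp add: residual_bound)
  then show ?thesis
    by (simp add: power2_eq_square algebra_simps)
qed

lemma card_weight_index_le: "card (weight_index d L r K) \<le> K * (r * (d + 1) + L * r * (r + 1) + 1)"
proof -
  let ?A = "{0::nat} \<times> {1..K} \<times> {1..r} \<times> {0..d}"
  let ?B = "{1..L-1} \<times> {1..K} \<times> {1..r} \<times> {0..r}"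
  let ?C = "{L} \<times> {1::nat} \<times> {1::nat} \<times> {1..K}"
  have "weight_index d L r K = ?A \<union> ?B \<union> ?C"
    unfolding weight_index_def by auto
  then have "card (weight_index d L r K) \<le> card ?A + card ?B + card ?C"
    by (simp only:) (use card_Un_le[of "?A \<union> ?B" ?C] card_Un_le[of ?A ?B] in linarith)
  also have "\<dots> = K * (r * (d + 1)) + (L - 1) * (K * (r * (r + 1))) + K"
    by (simp add: card_cartesian_product)
  also have "\<dots> \<le> K * (r * (d + 1)) + L * (K * (r * (r + 1))) + K"
    by simp
  also have "\<dots> = K * (r * (d + 1) + L * r * (r + 1) + 1)"
    by (simp add: algebra_simps)
  finally show ?thesis .
qed

lemma grad_norm_le:
  assumes "\<And>p. p \<in> I \<Longrightarrow> \<bar>deriv (\<lambda>t. F (w(p := t))) (w p)\<bar> \<le> G" and "0 \<le> G"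
  shows "grad_norm F I w \<le> sqrt (card I) * G"
proof -
  have "(\<Sum>p\<in>I. (deriv (\<lambda>t. F (w(p := t))) (w p))\<^sup>2) \<le> card I * G\<^sup>2"
    using assms by (intro sum_bounded_above) (metis abs_ge_zero power2_abs power_mono)
  then have "grad_norm F I w \<le> sqrt (card I * G\<^sup>2)"
    unfolding grad_norm_def by (rule real_sqrt_le_mono)
  also have "\<dots> = sqrt (card I) * G"
    using \<open>0 \<le> G\<close> by (simp add: real_sqrt_mult)
  finally show ?thesis .
qed

lemma grad_norm_emp_risk_le:
  fixes w :: weights
  assumes "1 \<le> a" and "1 \<le> B" and "1 \<le> \<gamma>"
    and data_bound: "\<forall>i\<in>{1..n}. (\<forall>j\<in>{1..d}. \<bar>X i j\<bar> \<le> a) \<and> \<bar>Y i\<bar> \<le> \<beta>"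
    and "\<beta> \<le> real K * \<gamma>"
    and out_bound: "\<forall>k. \<bar>w (L, 1, 1, k)\<bar> \<le> \<gamma>"
    and w_bound: "\<forall>l\<in>{1..L-1}. \<forall>k i j. \<bar>w (l, k, i, j)\<bar> \<le> B"
  shows "grad_norm (emp_risk d L r K n X Y) (weight_index d L r K) w
    \<le> sqrt (real K * real (r * (d + 1) + L * r * (r + 1) + 1))
      * (16 * a * real K * \<gamma>\<^sup>2 * ((real r + 1) * B) ^ L)"
    (is "_ \<le> sqrt ?N * ?G")
proof -
  have "((real r + 1) * B) ^ (L - 1) \<le> ((real r + 1) * B) ^ L"
    using \<open>1 \<le> B\<close> by (intro power_increasing) (simp_all add: mult_ge1_I)
  then have "16 * a * real K * \<gamma>\<^sup>2 * ((real r + 1) * B) ^ (L - 1) \<le> ?G"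
    using \<open>1 \<le> a\<close> by (intro mult_left_mono) simp_all
  then have "\<bar>deriv (\<lambda>t. emp_risk d L r K n X Y (w(p := t))) (w p)\<bar> \<le> ?G" for p
    using abs_partial_deriv_emp_risk_le[OF assms, where p = p and r = r] by linarith
  then have "grad_norm (emp_risk d L r K n X Y) (weight_index d L r K) w
      \<le> sqrt (card (weight_index d L r K)) * ?G"
    by (rule grad_norm_le) (use \<open>1 \<le> a\<close> \<open>1 \<le> B\<close> in simp)
  also have "\<dots> \<le> sqrt ?N * ?G"
    using card_weight_index_le[of d L r K] \<open>1 \<le> a\<close> \<open>1 \<le> B\<close>
    by (intro mult_right_mono real_sqrt_le_mono) (simp_all only: of_nat_mult[symmetric] of_nat_le_iff, simp)
  finally show ?thesis .
qed

lemma powr_three_halves: "0 \<le> x \<Longrightarrow> x powr (3 / 2) = x * sqrt x"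
  by (simp add: powr_add[of x 1 "1 / 2", simplified] powr_half_sqrt)

theorem lemma3:
  fixes d L r :: nat and a :: real
  assumes "a \<ge> 1" and "L \<ge> 1"
  shows "\<exists>c14 > 0. \<forall>(K::nat) (n::nat) (\<beta>::real) (B::real) (\<gamma>::real)
            (X :: nat \<Rightarrow> nat \<Rightarrow> real) (Y :: nat \<Rightarrow> real) (w :: weights).
     \<beta> \<ge> 1 \<longrightarrow> B \<ge> 1 \<longrightarrow> \<gamma> \<ge> 1 \<longrightarrow>
     (\<forall>i\<in>{1..n}. (\<forall>j\<in>{1..d}. \<bar>X i j\<bar> \<le> a) \<and> \<bar>Y i\<bar> \<le> \<beta>) \<longrightarrow>
     real K * \<gamma> \<ge> \<beta> \<longrightarrow>
     (\<forall>k. \<bar>w (L,1,1,k)\<bar> \<le> \<gamma>) \<longrightarrow>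
     (\<forall>l\<in>{1..L-1}. \<forall>k i j. \<bar>w (l,k,i,j)\<bar> \<le> B) \<longrightarrow>
     grad_norm (emp_risk d L r K n X Y) (weight_index d L r K) w
       \<le> c14 * real K powr (3/2) * \<gamma>\<^sup>2 * B ^ L"
proof -
  define C where "C = real (r * (d + 1) + L * r * (r + 1) + 1)"
  have "0 < C"
    unfolding C_def by (simp only: of_nat_0_less_iff)
  show ?thesis
  proof (intro exI[of _ "16 * a * (real r + 1) ^ L * sqrt C"] conjI allI impI)
    show "0 < 16 * a * (real r + 1) ^ L * sqrt C"
      using \<open>a \<ge> 1\<close> \<open>0 < C\<close> by simp
    fix K n :: nat and \<beta> B \<gamma> :: real and X :: "nat \<Rightarrow> nat \<Rightarrow> real" and Y and w :: weights
    assume "\<beta> \<ge> 1" "B \<ge> 1" "\<gamma> \<ge> 1" "\<forall>i\<in>{1..n}. (\<forall>j\<in>{1..d}. \<bar>X i j\<bar> \<le> a) \<and> \<bar>Y i\<bar> \<le> \<beta>"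
      "real K * \<gamma> \<ge> \<beta>" "\<forall>k. \<bar>w (L,1,1,k)\<bar> \<le> \<gamma>" "\<forall>l\<in>{1..L-1}. \<forall>k i j. \<bar>w (l,k,i,j)\<bar> \<le> B"
    with \<open>a \<ge> 1\<close> have "grad_norm (emp_risk d L r K n X Y) (weight_index d L r K) w
        \<le> sqrt (real K * C) * (16 * a * real K * \<gamma>\<^sup>2 * ((real r + 1) * B) ^ L)"
      unfolding C_def by (intro grad_norm_emp_risk_le) simp_all
    also have "\<dots> = 16 * a * (real r + 1) ^ L * sqrt C * (real K * sqrt K) * \<gamma>\<^sup>2 * B ^ L"
      unfolding power_mult_distrib by (simp add: real_sqrt_mult algebra_simps)
    finally show "grad_norm (emp_risk d L r K n X Y) (weight_index d L r K) w
        \<le> 16 * a * (real r + 1) ^ L * sqrt C * real K powr (3 / 2) * \<gamma>\<^sup>2 * B ^ L"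
      by (simp add: powr_three_halves)
  qed
qed

end
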